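(* Let $d,d'\in\mathcal D$, with notation $(\mathbf P,\mathbf r,J_\mu,J_{\mu,\sigma},\mathbf g)$ for $d$ and $(\mathbf P',\mathbf r',J'_{\mu,\sigma})$ for $d'$, and write $p(i,j),r(i),g(j)$, $p'(i,j),r'(i)$ for the entries. If $$\sum_{j\in\mathcal S}p'(i,j)g(j)+r'(i)-\beta(r'(i)-J_\mu)^2\ \ge\ \sum_{j\in\mathcal S}p(i,j)g(j)+r(i)-\beta(r(i)-J_\mu)^2\qquad\text{for all } i\in\mathcal S,$$ then $J'_{\mu,\sigma}\ge J_{\mu,\sigma}$. If moreover the inequality is strict for at least one $i\in\mathcal S$, then $J'_{\mu,\sigma}>J_{\mu,\sigma}$.
   Context: Let $\mathcal S=\{1,\dots,S\}$ be a finite state space and $\mathcal A$ a finite action set. For $i,j\in\mathcal S$, $a\in\mathcal A$, let $p^a(i,j)\ge 0$ with $\sum_{j}p^a(i,j)=1$ be transition probabilities and $r(i,a)\in\mathbb R$ rewards. A deterministic stationary policy is a map $d:\mathcal S\to\mathcal A$; $\mathcal D$ denotes the set of such policies. Under $d$, $\mathbf P^d$ is the $S\times S$ matrix with entries $p^{d(i)}(i,j)$ and $\mathbf r^d$ is the column vector with entries $r(i,d(i))$. Standing assumption: for every $d\in\mathcal D$ the chain with transition matrix $\mathbf P^d$ is irreducible, so it has a unique stationary distribution (row vector) $\boldsymbol\pi^d$, $\boldsymbol\pi^d\mathbf P^d=\boldsymbol\pi^d$, $\boldsymbol\pi^d\mathbf 1=1$, with all entries strictly positive. Define $J^d_\mu=\boldsymbol\pi^d\mathbf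 r^d$, $J^d_\sigma=\sum_i\pi^d(i)(r(i,d(i))-J^d_\mu)^2$, and for fixed $\beta>0$, $J^d_{\mu,\sigma}=J^d_\mu-\beta J^d_\sigma=\boldsymbol\pi^d\mathbf f^d$ with $f^d(i)=r(i,d(i))-\beta(r(i,d(i))-J^d_\mu)^2$. The performance potential $\mathbf g^d$ is any solution of $\mathbf g^d=\mathbf f^d-J^d_{\mu,\sigma}\mathbf 1+\mathbf P^d\mathbf g^d$ (unique up to an additive constant vector). *)

theory Defs
  imports Main "HOL-Library.Cardinality" Complex_Main
begin

(* States: a finite type 's; actions: a finite type 'a.
   Transition probabilities: p a i j = p^a(i,j); rewards: r i a = r(i,a).
   A deterministic stationary policy is d :: 's => 'a. *)

definition stochastic_kernel :: "('a \<Rightarrow> 's::finite \<Rightarrow> 's \<Rightarrow> real) \<Rightarrow> bool" where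
  "stochastic_kernel p \<longleftrightarrow> (\<forall>a i j. p a i j \<ge> 0) \<and> (\<forall>a i. (\<Sum>j\<in>UNIV. p a i j) = 1)"

definition Pmat :: "('a \<Rightarrow> 's \<Rightarrow> 's \<Rightarrow> real) \<Rightarrow> ('s \<Rightarrow> 'a) \<Rightarrow> 's \<Rightarrow> 's \<Rightarrow> real" where
  "Pmat p d i j = p (d i) i j"

definition rvec :: "('s \<Rightarrow> 'a \<Rightarrow> real) \<Rightarrow> ('s \<Rightarrow> 'a) \<Rightarrow> 's \<Rightarrow> real" where
  "rvec r d i = r i (d i)"

fun mpow :: "('s::finite \<Rightarrow> 's \<Rightarrow> real) \<Rightarrow> nat \<Rightarrow> 's \<Rightarrow> 's \<Rightarrow> real" where
  "mpow P 0 i j = (if i = j then 1 else 0)"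
| "mpow P (Suc n) i j = (\<Sum>k\<in>UNIV. mpow P n i k * P k j)"

definition irreducible_chain :: "('s::finite \<Rightarrow> 's \<Rightarrow> real) \<Rightarrow> bool" where
  "irreducible_chain P \<longleftrightarrow> (\<forall>i j. \<exists>n. mpow P n i j > 0)"

definition is_stationary :: "('s::finite \<Rightarrow> 's \<Rightarrow> real) \<Rightarrow> ('s \<Rightarrow> real) \<Rightarrow> bool" where
  "is_stationary P \<pi> \<longleftrightarrow> (\<forall>j. (\<Sum>i\<in>UNIV. \<pi> i * P i j) = \<pi> j) \<and> (\<Sum>i\<in>UNIV. \<pi> i) = 1"

(* the (unique, under irreducibility) stationary distribution pi^d *)
definition stat_dist :: "('s::finite \<Rightarrow> 's \<Rightarrow> real) \<Rightarrow> 's \<Rightarrow> real" where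
  "stat_dist P = (THE \<pi>. is_stationary P \<pi>)"

definition J_mu :: "('a \<Rightarrow> 's::finite \<Rightarrow> 's \<Rightarrow> real) \<Rightarrow> ('s \<Rightarrow> 'a \<Rightarrow> real) \<Rightarrow> ('s \<Rightarrow> 'a) \<Rightarrow> real" where
  "J_mu p r d = (\<Sum>i\<in>UNIV. stat_dist (Pmat p d) i * rvec r d i)"

definition J_sigma :: "('a \<Rightarrow> 's::finite \<Rightarrow> 's \<Rightarrow> real) \<Rightarrow> ('s \<Rightarrow> 'a \<Rightarrow> real) \<Rightarrow> ('s \<Rightarrow> 'a) \<Rightarrow> real" where
  "J_sigma p r d = (\<Sum>i\<in>UNIV. stat_dist (Pmat p d) i * (rvec r d i - J_mu p r d)\<^sup>2)"

definition J_mu_sigma :: "real \<Rightarrow> ('a \<Rightarrow> 's::finite \<Rightarrow> 's \<Rightarrow> real) \<Rightarrow> ('s \<Rightarrow> 'a \<Rightarrow> real) \<Rightarrow> ('s \<Rightarrow> 'a) \<Rightarrow> real" where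
  "J_mu_sigma \<beta> p r d = J_mu p r d - \<beta> * J_sigma p r d"

definition fvec :: "real \<Rightarrow> ('a \<Rightarrow> 's::finite \<Rightarrow> 's \<Rightarrow> real) \<Rightarrow> ('s \<Rightarrow> 'a \<Rightarrow> real) \<Rightarrow> ('s \<Rightarrow> 'a) \<Rightarrow> 's \<Rightarrow> real" where
  "fvec \<beta> p r d i = rvec r d i - \<beta> * (rvec r d i - J_mu p r d)\<^sup>2"

definition is_potential :: "real \<Rightarrow> ('a \<Rightarrow> 's::finite \<Rightarrow> 's \<Rightarrow> real) \<Rightarrow> ('s \<Rightarrow> 'a \<Rightarrow> real) \<Rightarrow> ('s \<Rightarrow> 'a) \<Rightarrow> ('s \<Rightarrow> real) \<Rightarrow> bool" where
  "is_potential \<beta> p r d g \<longleftrightarrow>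
     (\<forall>i. g i = fvec \<beta> p r d i - J_mu_sigma \<beta> p r d + (\<Sum>j\<in>UNIV. Pmat p d i j * g j))"

end

theory Submission
  imports Defs "HOL-Analysis.Analysis"
begin

text \<open>Write \<open>Q e i\<close> for the quantity compared in the hypothesis, evaluated at policy \<open>e\<close>,
  and let \<open>w\<close> be the stationary distribution of \<open>d'\<close>. The Poisson equation gives
  \<open>Q d i = g i + J\<^sub>\<mu>\<^sub>,\<^sub>\<sigma>\<close>; averaging \<open>Q d' - Q d\<close> against \<open>w\<close> kills the potential term
  by stationarity, and splitting the \<open>w\<close>-mean square deviation of the rewards of \<open>d'\<close> from
  \<open>J\<^sub>\<mu>\<close> at their own mean \<open>J'\<^sub>\<mu>\<close> yields the performance difference formula
  \<open>J'\<^sub>\<mu>\<^sub>,\<^sub>\<sigma> - J\<^sub>\<mu>\<^sub>,\<^sub>\<sigma> = (\<Sum>i. w i * (Q d' i - Q d i)) + \<beta> * (J'\<^sub>\<mu> - J\<^sub>\<mu>)\<^sup>2\<close>.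
  Both terms are nonnegative, and the first is positive as soon as one \<open>Q d' i > Q d i\<close>,
  because irreducibility makes \<open>w\<close> strictly positive.\<close>

definition stochastic_matrix :: "('s::finite \<Rightarrow> 's \<Rightarrow> real) \<Rightarrow> bool" where
  "stochastic_matrix P \<longleftrightarrow> (\<forall>i j. P i j \<ge> 0) \<and> (\<forall>i. (\<Sum>j\<in>UNIV. P i j) = 1)"

definition left_invariant :: "('s::finite \<Rightarrow> 's \<Rightarrow> real) \<Rightarrow> ('s \<Rightarrow> real) \<Rightarrow> bool" where
  "left_invariant P x \<longleftrightarrow> (\<forall>j. (\<Sum>i\<in>UNIV. x i * P i j) = x j)"

lemma stochastic_matrix_Pmat:
  "stochastic_kernel p \<Longrightarrow> stochastic_matrix (Pmat p d)"
  by (simp add: stochastic_kernel_def stochastic_matrix_def Pmat_def)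

lemma mpow_nonneg: "stochastic_matrix P \<Longrightarrow> mpow P n i j \<ge> 0"
  by (induction n arbitrary: j)
    (auto simp: stochastic_matrix_def intro!: sum_nonneg mult_nonneg_nonneg)

lemma left_invariant_lincomb:
  "left_invariant P x \<Longrightarrow> left_invariant P y \<Longrightarrow> left_invariant P (\<lambda>i. a * x i + b * y i)"
  by (simp add: left_invariant_def distrib_right sum.distrib
      sum_distrib_left[symmetric] mult.assoc)

lemma left_invariant_mpow:
  assumes "left_invariant P x"
  shows "(\<Sum>i\<in>UNIV. x i * mpow P n i j) = x j"
proof (induction n arbitrary: j)
  case 0
  then show ?case by (simp add: if_distrib cong: if_cong)
next
  case (Suc n)
  have "(\<Sum>i\<in>UNIV. x i * mpow P (Suc n) i j)
      = (\<Sum>k\<in>UNIV. (\<Sum>i\<in>UNIV. x i * mpow P n i k) * P k j)"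
    by (simp add: sum_distrib_left sum_distrib_right mult.assoc) (rule sum.swap)
  also have "\<dots> = x j" using Suc assms by (simp add: left_invariant_def)
  finally show ?case .
qed

lemma left_invariant_pos_everywhere:
  assumes P: "stochastic_matrix P" "irreducible_chain P" and x: "left_invariant P x"
    and nonneg: "\<And>k. x k \<ge> 0" and pos: "x i > 0"
  shows "x j > 0"
proof -
  obtain n where n: "mpow P n i j > 0"
    using P(2) by (auto simp: irreducible_chain_def)
  have "0 < x i * mpow P n i j" using pos n by simp
  also have "\<dots> \<le> (\<Sum>k\<in>UNIV. x k * mpow P n k j)"
    by (rule member_le_sum) (auto simp: nonneg mpow_nonneg[OF P(1)])
  also have "\<dots> = x j" using left_invariant_mpow[OF x] .
  finally show ?thesis .
qed

text \<open>Summing \<open>\<bar>x j\<bar> \<le> \<Sum>i. \<bar>x i\<bar> * P i j\<close> over \<open>j\<close> gives equality of the totals,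
  hence equality in every coordinate.\<close>

lemma left_invariant_abs:
  assumes P: "stochastic_matrix P" and x: "left_invariant P x"
  shows "left_invariant P (\<lambda>i. \<bar>x i\<bar>)"
proof -
  define y where "y j = (\<Sum>i\<in>UNIV. \<bar>x i\<bar> * P i j)" for j
  have le: "\<bar>x j\<bar> \<le> y j" for j
  proof -
    have "\<bar>x j\<bar> = \<bar>\<Sum>i\<in>UNIV. x i * P i j\<bar>" using x by (simp add: left_invariant_def)
    also have "\<dots> \<le> (\<Sum>i\<in>UNIV. \<bar>x i * P i j\<bar>)" by (rule sum_abs)
    also have "\<dots> = y j" using P by (simp add: y_def stochastic_matrix_def abs_mult)
    finally show ?thesis .
  qed
  have "(\<Sum>j\<in>UNIV. y j) = (\<Sum>i\<in>UNIV. \<bar>x i\<bar> * (\<Sum>j\<in>UNIV. P i j))"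
    unfolding y_def by (simp add: sum_distrib_left) (rule sum.swap)
  also have "\<dots> = (\<Sum>j\<in>UNIV. \<bar>x j\<bar>)" using P by (simp add: stochastic_matrix_def)
  finally have "(\<Sum>j\<in>UNIV. y j - \<bar>x j\<bar>) = 0" by (simp add: sum_subtractf)
  then have "y j - \<bar>x j\<bar> = 0" for j
    using sum_nonneg_eq_0_iff[of UNIV "\<lambda>j. y j - \<bar>x j\<bar>"] le by simp
  then show ?thesis by (simp add: left_invariant_def y_def)
qed

text \<open>The positive and negative parts \<open>(\<bar>x\<bar> + x) / 2\<close> and \<open>(\<bar>x\<bar> - x) / 2\<close> are again invariant, so by
  irreducibility each of them vanishes identically or nowhere.\<close>

lemma left_invariant_sign_cases:
  assumes P: "stochastic_matrix P" "irreducible_chain P" and x: "left_invariant P x"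
  shows "(\<forall>i. x i = 0) \<or> (\<forall>i. x i > 0) \<or> (\<forall>i. x i < 0)"
proof -
  have ax: "left_invariant P (\<lambda>i. \<bar>x i\<bar>)" by (rule left_invariant_abs[OF P(1) x])
  have parts: "left_invariant P (\<lambda>i. (1/2) * \<bar>x i\<bar> + (s/2) * x i)" for s
    by (rule left_invariant_lincomb[OF ax x])
  have part_pos: "(1/2) * \<bar>x j\<bar> + (s/2) * x j > 0"
    if "s * x i > 0" "s = 1 \<or> s = -1" for s i j
  proof (rule left_invariant_pos_everywhere[OF P parts, of s i])
    show "0 \<le> (1/2) * \<bar>x k\<bar> + (s/2) * x k" for k
      using that(2) by (cases "x k \<ge> 0") auto
    show "0 < (1/2) * \<bar>x i\<bar> + (s/2) * x i"
      using that by (cases "x i \<ge> 0") auto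
  qed
  consider "\<exists>i. x i > 0" | "\<exists>i. x i < 0" | "\<forall>i. x i = 0"
    by (meson linorder_neqE_linordered_idom)
  then show ?thesis
  proof cases
    case 1
    then obtain i where "x i > 0" by blast
    then have "x j > 0" for j using part_pos[of 1 i j] by (cases "x j \<ge> 0") auto
    then show ?thesis by blast
  next
    case 2
    then obtain i where "x i < 0" by blast
    then have "x j < 0" for j using part_pos[of "-1" i j] by (cases "x j \<ge> 0") auto
    then show ?thesis by blast
  qed blast
qed

text \<open>A nonzero left null vector of \<open>P - I\<close> exists because \<open>P - I\<close> kills the constant vector,
  so \<open>det (P - I) = 0\<close>.\<close>

lemma left_invariant_exists_nonzero:
  fixes P :: "'s::finite \<Rightarrow> 's \<Rightarrow> real"
  assumes P: "stochastic_matrix P"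
  shows "\<exists>x. left_invariant P x \<and> (\<exists>i. x i \<noteq> 0)"
proof -
  define B :: "real^'s^'s" where "B = (\<chi> i j. P i j - (if i = j then 1 else 0))"
  have "B *v (\<chi> i. 1) = 0"
    using P by (simp add: B_def matrix_vector_mult_def vec_eq_iff sum_subtractf stochastic_matrix_def)
  moreover have "(\<chi> i. (1::real)) \<noteq> 0" by (simp add: vec_eq_iff)
  ultimately have "det (transpose B) = 0"
    by (metis det_transpose vec.inj_iff_eq_0 det_eq_0_rank less_rank_noninjective)
  then obtain v where v: "transpose B *v v = 0" "v \<noteq> 0"
    by (metis det_eq_0_rank less_rank_noninjective vec.inj_iff_eq_0)
  have "left_invariant P (\<lambda>i. v $ i)"
    unfolding left_invariant_def
  proof
    fix j
    have "(\<Sum>i\<in>UNIV. (P i j - (if i = j then 1 else 0)) * v $ i) = 0"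
      using v(1) by (simp add: B_def matrix_vector_mult_def vec_eq_iff transpose_def)
    moreover have "(P i j - (if i = j then 1 else 0)) * v $ i
        = v $ i * P i j - (if i = j then v $ i else 0)" for i
      by (simp add: algebra_simps)
    ultimately have "(\<Sum>i\<in>UNIV. v $ i * P i j - (if i = j then v $ i else 0)) = 0"
      by simp
    then show "(\<Sum>i\<in>UNIV. v $ i * P i j) = v $ j" by (simp add: sum_subtractf)
  qed
  moreover have "\<exists>i. v $ i \<noteq> 0" using v(2) by (simp add: vec_eq_iff)
  ultimately show ?thesis by blast
qed

lemma stationary_positive_exists:
  assumes P: "stochastic_matrix P" "irreducible_chain P"
  shows "\<exists>\<pi>. is_stationary P \<pi> \<and> (\<forall>i. \<pi> i > 0)"
proof -
  obtain x where x: "left_invariant P x" "\<exists>i. x i \<noteq> 0"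
    using left_invariant_exists_nonzero[OF P(1)] by blast
  obtain y where y: "left_invariant P y" "\<And>i. y i > 0"
  proof (cases "\<forall>i. x i > 0")
    case False
    then have "\<forall>i. x i < 0" using left_invariant_sign_cases[OF P x(1)] x(2) by auto
    moreover have "left_invariant P (\<lambda>i. - x i)"
      using left_invariant_lincomb[OF x(1) x(1), of "-1" 0] by simp
    ultimately show ?thesis using that[of "\<lambda>i. - x i"] by auto
  qed (use x in blast)
  define s where "s = (\<Sum>i\<in>UNIV. y i)"
  have "s > 0" unfolding s_def using y(2) by (simp add: sum_pos)
  have "left_invariant P (\<lambda>i. y i / s)"
    using left_invariant_lincomb[OF y(1) y(1), of "1/s" 0] by simp
  moreover have "(\<Sum>i\<in>UNIV. y i / s) = 1"
    using \<open>s > 0\<close> by (simp add: s_def sum_divide_distrib[symmetric])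
  ultimately have "is_stationary P (\<lambda>i. y i / s)"
    by (simp add: is_stationary_def left_invariant_def)
  with y(2) \<open>s > 0\<close> show ?thesis by auto
qed

lemma stationary_unique:
  assumes P: "stochastic_matrix P" "irreducible_chain P"
    and \<pi>: "is_stationary P \<pi>" and \<rho>: "is_stationary P \<rho>"
  shows "\<pi> = \<rho>"
proof -
  have "left_invariant P (\<lambda>i. 1 * \<pi> i + (-1) * \<rho> i)"
    by (rule left_invariant_lincomb) (use \<pi> \<rho> in \<open>auto simp: is_stationary_def left_invariant_def\<close>)
  then have diff: "left_invariant P (\<lambda>i. \<pi> i - \<rho> i)" by simp
  have sum0: "(\<Sum>i\<in>UNIV. \<pi> i - \<rho> i) = 0"
    using \<pi> \<rho> by (simp add: is_stationary_def sum_subtractf)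
  from left_invariant_sign_cases[OF P diff] consider
    "\<forall>i. \<pi> i - \<rho> i = 0" | "\<forall>i. \<pi> i - \<rho> i > 0" | "\<forall>i. \<rho> i - \<pi> i > 0" by force
  then show ?thesis
  proof cases
    case 2
    then have "(\<Sum>i\<in>UNIV. \<pi> i - \<rho> i) > 0" by (simp add: sum_pos)
    with sum0 show ?thesis by simp
  next
    case 3
    then have "(\<Sum>i\<in>UNIV. \<rho> i - \<pi> i) > 0" by (simp add: sum_pos)
    with sum0 show ?thesis by (simp add: sum_subtractf)
  qed auto
qed

lemma stat_dist_stationary_positive:
  assumes P: "stochastic_matrix P" "irreducible_chain P"
  shows "is_stationary P (stat_dist P)" and "stat_dist P i > 0"
proof -
  obtain \<pi> where \<pi>: "is_stationary P \<pi>" "\<forall>i. \<pi> i > 0"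
    using stationary_positive_exists[OF P] by blast
  have "stat_dist P = \<pi>"
    unfolding stat_dist_def using \<pi>(1) stationary_unique[OF P _ \<pi>(1)] by (rule the_equality)
  with \<pi> show "is_stationary P (stat_dist P)" and "stat_dist P i > 0" by auto
qed

lemma is_stationary_sum_mult:
  assumes "is_stationary P w"
  shows "(\<Sum>i\<in>UNIV. w i * (\<Sum>j\<in>UNIV. P i j * g j)) = (\<Sum>j\<in>UNIV. w j * g j)"
proof -
  have "(\<Sum>i\<in>UNIV. w i * (\<Sum>j\<in>UNIV. P i j * g j)) = (\<Sum>j\<in>UNIV. (\<Sum>i\<in>UNIV. w i * P i j) * g j)"
    by (simp add: sum_distrib_left sum_distrib_right mult.assoc) (rule sum.swap)
  also have "\<dots> = (\<Sum>j\<in>UNIV. w j * g j)" using assms by (simp add: is_stationary_def)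
  finally show ?thesis .
qed

lemma weighted_sq_dev_shift:
  fixes w v :: "'s::finite \<Rightarrow> real"
  assumes "(\<Sum>i\<in>UNIV. w i) = 1"
  defines "m \<equiv> \<Sum>k\<in>UNIV. w k * v k"
  shows "(\<Sum>i\<in>UNIV. w i * (v i - c)\<^sup>2) = (\<Sum>i\<in>UNIV. w i * (v i - m)\<^sup>2) + (m - c)\<^sup>2"
proof -
  have "w i * (v i - c)\<^sup>2
      = w i * (v i - m)\<^sup>2 + 2 * (m - c) * (w i * v i) + ((m - c)\<^sup>2 - 2 * (m - c) * m) * w i" for i
    by (simp add: power2_eq_square algebra_simps)
  then have "(\<Sum>i\<in>UNIV. w i * (v i - c)\<^sup>2) = (\<Sum>i\<in>UNIV. w i * (v i - m)\<^sup>2)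
      + 2 * (m - c) * m + ((m - c)\<^sup>2 - 2 * (m - c) * m) * (\<Sum>i\<in>UNIV. w i)"
    by (simp add: sum.distrib sum_distrib_left m_def)
  with assms(1) show ?thesis by simp
qed

lemma J_mu_sigma_difference:
  fixes p :: "'a \<Rightarrow> 's::finite \<Rightarrow> 's \<Rightarrow> real"
  assumes kernel: "stochastic_kernel p" and irred: "irreducible_chain (Pmat p d')"
    and pot: "is_potential \<beta> p r d g"
  defines "Q e i \<equiv> (\<Sum>j\<in>UNIV. p (e i) i j * g j) + r i (e i) - \<beta> * (r i (e i) - J_mu p r d)\<^sup>2"
  shows "J_mu_sigma \<beta> p r d' = J_mu_sigma \<beta> p r d
      + (\<Sum>i\<in>UNIV. stat_dist (Pmat p d') i * (Q d' i - Q d i)) + \<beta> * (J_mu p r d' - J_mu p r d)\<^sup>2"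
proof -
  define w where "w = stat_dist (Pmat p d')"
  have w: "is_stationary (Pmat p d') w"
    unfolding w_def by (rule stat_dist_stationary_positive[OF stochastic_matrix_Pmat[OF kernel] irred])
  then have wsum: "(\<Sum>i\<in>UNIV. w i) = 1" by (simp add: is_stationary_def)
  define J J' where "J = J_mu p r d" and "J' = J_mu p r d'"
  define v where "v i = r i (d' i)" for i
  have J': "J' = (\<Sum>i\<in>UNIV. w i * v i)"
    by (simp add: J'_def J_mu_def w_def v_def rvec_def)
  have Qd: "Q d i = g i + J_mu_sigma \<beta> p r d" for i
  proof -
    have "g i = fvec \<beta> p r d i - J_mu_sigma \<beta> p r d + (\<Sum>j\<in>UNIV. Pmat p d i j * g j)"
      using pot unfolding is_potential_def by blast
    then show ?thesis unfolding Q_def fvec_def rvec_def Pmat_def by linarith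
  qed
  have Qd': "Q d' i = (\<Sum>j\<in>UNIV. Pmat p d' i j * g j) + v i - \<beta> * (v i - J)\<^sup>2" for i
    by (simp add: Q_def Pmat_def v_def J_def)
  have "w i * (Q d' i - Q d i) = w i * (\<Sum>j\<in>UNIV. Pmat p d' i j * g j) - w i * g i
      + w i * v i - \<beta> * (w i * (v i - J)\<^sup>2) - J_mu_sigma \<beta> p r d * w i" for i
    by (simp only: Qd Qd') (simp add: algebra_simps)
  then have "(\<Sum>i\<in>UNIV. w i * (Q d' i - Q d i))
      = (\<Sum>i\<in>UNIV. w i * (\<Sum>j\<in>UNIV. Pmat p d' i j * g j)) - (\<Sum>i\<in>UNIV. w i * g i)
        + (\<Sum>i\<in>UNIV. w i * v i) - \<beta> * (\<Sum>i\<in>UNIV. w i * (v i - J)\<^sup>2)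
        - J_mu_sigma \<beta> p r d * (\<Sum>i\<in>UNIV. w i)"
    by (simp add: sum.distrib sum_subtractf sum_distrib_left)
  also have "\<dots> = J' - \<beta> * (\<Sum>i\<in>UNIV. w i * (v i - J')\<^sup>2) - \<beta> * (J' - J)\<^sup>2
      - J_mu_sigma \<beta> p r d"
    unfolding is_stationary_sum_mult[OF w] weighted_sq_dev_shift[OF wsum, of v J] wsum J'[symmetric]
    by (simp add: right_diff_distrib distrib_left)
  also have "J' - \<beta> * (\<Sum>i\<in>UNIV. w i * (v i - J')\<^sup>2) = J_mu_sigma \<beta> p r d'"
    by (simp add: J_mu_sigma_def J_sigma_def J'_def[symmetric] w_def[symmetric] v_def rvec_def)
  finally show ?thesis by (simp add: w_def J_def J'_def)
qed

theorem theorem1: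
  fixes p :: "'a::finite \<Rightarrow> 's::finite \<Rightarrow> 's \<Rightarrow> real"
    and r :: "'s \<Rightarrow> 'a \<Rightarrow> real"
    and \<beta> :: real
    and d d' :: "'s \<Rightarrow> 'a"
    and g :: "'s \<Rightarrow> real"
  assumes kernel: "stochastic_kernel p"
    and irred: "\<forall>e :: 's \<Rightarrow> 'a. irreducible_chain (Pmat p e)"
    and beta_pos: "\<beta> > 0"
    and pot: "is_potential \<beta> p r d g"
    and ineq: "\<forall>i. (\<Sum>j\<in>UNIV. p (d' i) i j * g j) + r i (d' i) - \<beta> * (r i (d' i) - J_mu p r d)\<^sup>2
                 \<ge> (\<Sum>j\<in>UNIV. p (d i) i j * g j) + r i (d i) - \<beta> * (r i (d i) - J_mu p r d)\<^sup>2"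
  shows "J_mu_sigma \<beta> p r d' \<ge> J_mu_sigma \<beta> p r d
      \<and> ((\<exists>i. (\<Sum>j\<in>UNIV. p (d' i) i j * g j) + r i (d' i) - \<beta> * (r i (d' i) - J_mu p r d)\<^sup>2
                 > (\<Sum>j\<in>UNIV. p (d i) i j * g j) + r i (d i) - \<beta> * (r i (d i) - J_mu p r d)\<^sup>2)
         \<longrightarrow> J_mu_sigma \<beta> p r d' > J_mu_sigma \<beta> p r d)"
proof -
  let ?Q = "\<lambda>e i. (\<Sum>j\<in>UNIV. p (e i) i j * g j) + r i (e i) - \<beta> * (r i (e i) - J_mu p r d)\<^sup>2"
  define w where "w = stat_dist (Pmat p d')"
  have w_pos: "w i > 0" for i
    unfolding w_def by (rule stat_dist_stationary_positive[OF stochastic_matrix_Pmat[OF kernel]])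
      (use irred in blast)
  have diff: "J_mu_sigma \<beta> p r d' = J_mu_sigma \<beta> p r d + (\<Sum>i\<in>UNIV. w i * (?Q d' i - ?Q d i))
      + \<beta> * (J_mu p r d' - J_mu p r d)\<^sup>2"
    unfolding w_def by (rule J_mu_sigma_difference[OF kernel _ pot]) (use irred in blast)
  have gain: "0 \<le> w i * (?Q d' i - ?Q d i)" for i
    using ineq w_pos[of i] by (intro mult_nonneg_nonneg) auto
  have variance_gain: "0 \<le> \<beta> * (J_mu p r d' - J_mu p r d)\<^sup>2"
    using beta_pos by simp
  have strict: "0 < (\<Sum>k\<in>UNIV. w k * (?Q d' k - ?Q d k))" if "?Q d' i > ?Q d i" for i
  proof -
    have "0 < w i * (?Q d' i - ?Q d i)" using that w_pos[of i] by simp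
    also have "\<dots> \<le> (\<Sum>k\<in>UNIV. w k * (?Q d' k - ?Q d k))"
      by (rule member_le_sum) (use gain in auto)
    finally show ?thesis .
  qed
  have "0 \<le> (\<Sum>k\<in>UNIV. w k * (?Q d' k - ?Q d k))"
    by (rule sum_nonneg) (use gain in blast)
  with diff variance_gain have "J_mu_sigma \<beta> p r d' \<ge> J_mu_sigma \<beta> p r d" by linarith
  moreover have "J_mu_sigma \<beta> p r d' > J_mu_sigma \<beta> p r d" if "?Q d' i > ?Q d i" for i
    using strict[OF that] diff variance_gain by linarith
  ultimately show ?thesis by blast
qed

end
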